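(* Let $p\ge1$, $h,w,s$ positive integers with $s\le h$, $X\in\mathbb{R}^{h\times w}$ nonzero, $0<B\le wh^2$, $\delta\in(0,1/4)$, and $x_{\min}=\min_{|X_{i,j}|>0}|X_{i,j}|^p$. Let $0\le r\le l$ with $l-r\le \delta x_{\min}/(wh^2)$. Let $\Omega_l$ be an $l$-optimal support with $\mathrm{EMD}[\Omega_l]\le B$ and $\Omega_r$ an $r$-optimal support with $\mathrm{EMD}[\Omega_r]\ge B$. Let $d=\lfloor \mathrm{EMD}[\Omega_r]/B\rfloor$ and let $\Omega_r'$ be any support with $\Phi[\Omega_r']\ge\Phi[\Omega_r]/(2(d+1))$. Then, with $\mathrm{OPT}=\max_{\Omega\in\mathbb{M}_{k,B}}\Phi[\Omega]$, $$\max\{\Phi[\Omega_r'],\Phi[\Omega_l]\}\ \ge\ \left(\tfrac14-\delta\right)\mathrm{OPT}.$$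
   Context: A support is a set $\Omega\subseteq[h]\times[w]$, with columns $\Omega_j=\{i:(i,j)\in\Omega\}$; $\Phi[\Omega]=\sum_{(i,j)\in\Omega}|X_{i,j}|^p$. For finite $A,B\subset\mathbb{N}$ with $|A|=|B|$, $\mathrm{EMD}(A,B)=\min_\pi\sum_{a\in A}|a-\pi(a)|$ over bijections $\pi:A\to B$; if every column has $s$ elements, $\mathrm{EMD}[\Omega]=\sum_{j=1}^{w-1}\mathrm{EMD}(\Omega_j,\Omega_{j+1})$. $\mathcal{S}_s$ is the set of supports with $|\Omega_j|=s$ for all $j$, and $\mathbb{M}_{k,B}=\{\Omega\in\mathcal{S}_s:\mathrm{EMD}[\Omega]\le B\}$ where $k=sw$. For $\lambda\ge0$, a support $\Omega$ is $\lambda$-optimal if $\Omega\in\mathcal{S}_s$ and it maximizes $\Phi[\Omega]-\lambda\,\mathrm{EMD}[\Omega]$ over $\mathcal{S}_s$ (equivalently, it is the support of an integral min-cost max-flow in the EMD flow network with node costs $-|X_{i,j}|^p$, edge costs $\lambda|i_1-i_2|$ between consecutive columns, unit capacities, and supply/demand $s$). *)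

theory Defs
  imports Complex_Main
begin

text \<open>Supports are sets of positions (i,j) with rows i in {1..h} and columns j in {1..w}.
  The matrix X is a function nat => nat => real; only entries with 1 <= i <= h, 1 <= j <= w matter.\<close>

definition ndist :: "nat \<Rightarrow> nat \<Rightarrow> nat" where
  "ndist a b = (if a \<le> b then b - a else a - b)"

definition emd_set :: "nat set \<Rightarrow> nat set \<Rightarrow> nat" where
  "emd_set A B = (LEAST c. \<exists>\<pi>. bij_betw \<pi> A B \<and> c = (\<Sum>a\<in>A. ndist a (\<pi> a)))"

definition col :: "(nat \<times> nat) set \<Rightarrow> nat \<Rightarrow> nat set" where
  "col \<Omega> j = {i. (i, j) \<in> \<Omega>}"

definition EMD :: "nat \<Rightarrow> (nat \<times> nat) set \<Rightarrow> nat" where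
  "EMD w \<Omega> = (\<Sum>j = 1..w - 1. emd_set (col \<Omega> j) (col \<Omega> (j + 1)))"

definition Phi :: "real \<Rightarrow> (nat \<Rightarrow> nat \<Rightarrow> real) \<Rightarrow> (nat \<times> nat) set \<Rightarrow> real" where
  "Phi p X \<Omega> = (\<Sum>(i, j)\<in>\<Omega>. \<bar>X i j\<bar> powr p)"

definition is_support :: "nat \<Rightarrow> nat \<Rightarrow> (nat \<times> nat) set \<Rightarrow> bool" where
  "is_support h w \<Omega> \<longleftrightarrow> \<Omega> \<subseteq> {1..h} \<times> {1..w}"

definition S_s :: "nat \<Rightarrow> nat \<Rightarrow> nat \<Rightarrow> (nat \<times> nat) set set" where
  "S_s h w s = {\<Omega>. is_support h w \<Omega> \<and> (\<forall>j\<in>{1..w}. card (col \<Omega> j) = s)}"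

text \<open>M_{k,B} with k = s w.\<close>
definition M_kB :: "nat \<Rightarrow> nat \<Rightarrow> nat \<Rightarrow> real \<Rightarrow> (nat \<times> nat) set set" where
  "M_kB h w s B = {\<Omega> \<in> S_s h w s. real (EMD w \<Omega>) \<le> B}"

definition lambda_optimal ::
  "real \<Rightarrow> (nat \<Rightarrow> nat \<Rightarrow> real) \<Rightarrow> nat \<Rightarrow> nat \<Rightarrow> nat \<Rightarrow> real \<Rightarrow> (nat \<times> nat) set \<Rightarrow> bool" where
  "lambda_optimal p X h w s lam \<Omega> \<longleftrightarrow> \<Omega> \<in> S_s h w s \<and>
     (\<forall>\<Omega>'\<in>S_s h w s. Phi p X \<Omega>' - lam * real (EMD w \<Omega>') \<le> Phi p X \<Omega> - lam * real (EMD w \<Omega>))"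

definition x_min :: "real \<Rightarrow> (nat \<Rightarrow> nat \<Rightarrow> real) \<Rightarrow> nat \<Rightarrow> nat \<Rightarrow> real" where
  "x_min p X h w = Min {\<bar>X i j\<bar> powr p | i j. i \<in> {1..h} \<and> j \<in> {1..w} \<and> \<bar>X i j\<bar> > 0}"

definition OPT :: "real \<Rightarrow> (nat \<Rightarrow> nat \<Rightarrow> real) \<Rightarrow> nat \<Rightarrow> nat \<Rightarrow> nat \<Rightarrow> real \<Rightarrow> real" where
  "OPT p X h w s B = Max (Phi p X ` M_kB h w s B)"

end

theory Submission
  imports Defs
begin

text \<open>Let \<Omega>* attain OPT. Comparing the Lagrangians of \<Omega>r and \<Omega>* gives
  \<Phi>[\<Omega>r] \<ge> OPT + r (EMD[\<Omega>r] - B); comparing those of \<Omega>l and \<Omega>r gives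
  \<Phi>[\<Omega>l] \<ge> OPT - r B - (l - r) EMD[\<Omega>r] \<ge> (1 - \<delta>) OPT - r B,
  because EMD[\<Omega>r] \<le> w h^2 and x_min \<le> OPT (s full rows through a nonzero entry form
  a support with EMD 0). With u = EMD[\<Omega>r] / B \<ge> 1 the hypothesis on \<Omega>r' yields
  2 (u + 1) \<Phi>[\<Omega>r'] \<ge> OPT + r B (u - 1). Adding u - 1 times the bound on \<Omega>l eliminates
  r B and leaves (3u + 1) max{\<Phi>[\<Omega>r'], \<Phi>[\<Omega>l]} \<ge> (1 + (u - 1)(1 - \<delta>)) OPT,
  which is at least (3u + 1)(1/4 - \<delta>) OPT.\<close>

lemma Phi_nonneg: "0 \<le> Phi p X \<Omega>"
  unfolding Phi_def by (intro sum_nonneg) auto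

lemma emd_set_le_square:
  assumes "A \<subseteq> {1..h}" "B \<subseteq> {1..h}" "card A = card B"
  shows "emd_set A B \<le> h * h"
proof -
  have "finite A" "finite B" using assms(1,2) finite_subset by blast+
  then obtain \<pi> where \<pi>: "bij_betw \<pi> A B" using finite_same_card_bij assms(3) by blast
  have "emd_set A B \<le> (\<Sum>a\<in>A. ndist a (\<pi> a))"
    unfolding emd_set_def by (rule Least_le) (use \<pi> in blast)
  also have "\<dots> \<le> (\<Sum>a\<in>A. h)"
  proof (rule sum_mono)
    fix a assume "a \<in> A"
    then have "a \<le> h" "\<pi> a \<le> h" using \<pi> assms(1,2) bij_betwE by fastforce+
    then show "ndist a (\<pi> a) \<le> h" unfolding ndist_def by auto
  qed
  also have "\<dots> = card A * h" by simp
  also have "\<dots> \<le> h * h" using card_mono[OF _ assms(1)] by simp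
  finally show ?thesis .
qed

lemma EMD_le_S_s:
  assumes "\<Omega> \<in> S_s h w s"
  shows "real (EMD w \<Omega>) \<le> real w * real h ^ 2"
proof -
  have "EMD w \<Omega> \<le> (\<Sum>j = 1..w - 1. h * h)"
    unfolding EMD_def
  proof (rule sum_mono)
    fix j assume "j \<in> {1..w - 1}"
    with assms show "emd_set (col \<Omega> j) (col \<Omega> (j + 1)) \<le> h * h"
      by (intro emd_set_le_square) (auto simp: S_s_def is_support_def col_def)
  qed
  also have "\<dots> \<le> w * (h * h)" by simp
  finally show ?thesis by (simp add: power2_eq_square flip: of_nat_mult)
qed

lemma emd_set_self: "emd_set A A = 0"
  unfolding emd_set_def by (rule Least_eq_0) (rule exI[of _ id], simp add: ndist_def)

lemma Times_in_M_kB: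
  assumes "S \<subseteq> {1..h}" "card S = s" "0 \<le> B"
  shows "S \<times> {1..w} \<in> M_kB h w s B"
proof -
  have col: "col (S \<times> {1..w}) j = S" if "j \<in> {1..w}" for j
    using that by (auto simp: col_def)
  have "EMD w (S \<times> {1..w}) = 0"
    unfolding EMD_def
  proof (rule sum.neutral, intro ballI)
    fix j assume "j \<in> {1..w - 1}"
    then have "j \<in> {1..w}" "j + 1 \<in> {1..w}" by auto
    then show "emd_set (col (S \<times> {1..w}) j) (col (S \<times> {1..w}) (j + 1)) = 0"
      using col[of j] col[of "j + 1"] by (simp add: emd_set_self)
  qed
  then show ?thesis
    using assms col by (auto simp: M_kB_def S_s_def is_support_def)
qed

lemma finite_M_kB: "finite (M_kB h w s B)"
proof (rule finite_subset)
  show "M_kB h w s B \<subseteq> Pow ({1..h} \<times> {1..w})"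
    by (auto simp: M_kB_def S_s_def is_support_def)
qed simp

lemma Phi_le_OPT: "\<Omega> \<in> M_kB h w s B \<Longrightarrow> Phi p X \<Omega> \<le> OPT p X h w s B"
  unfolding OPT_def using finite_M_kB by (intro Max_ge) auto

lemma OPT_attained:
  assumes "M_kB h w s B \<noteq> {}"
  obtains \<Omega> where "\<Omega> \<in> M_kB h w s B" "Phi p X \<Omega> = OPT p X h w s B"
proof -
  have "OPT p X h w s B \<in> Phi p X ` M_kB h w s B"
    unfolding OPT_def using finite_M_kB assms by (intro Max_in) auto
  then show ?thesis using that by force
qed

lemma entry_le_OPT:
  assumes "i \<in> {1..h}" "j \<in> {1..w}" "0 < s" "s \<le> h" "0 \<le> B"
  shows "\<bar>X i j\<bar> powr p \<le> OPT p X h w s B"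
proof -
  have "s - 1 \<le> card ({1..h} - {i})" using assms(1,4) by simp
  then obtain T where T: "T \<subseteq> {1..h} - {i}" "card T = s - 1"
    by (rule obtain_subset_with_card_n)
  then have "finite T" by (meson finite_Diff finite_atLeastAtMost finite_subset)
  with T assms(1,3) have S: "insert i T \<subseteq> {1..h}" "card (insert i T) = s"
    by (auto simp: card_insert_if)
  have "\<bar>X i j\<bar> powr p \<le> Phi p X (insert i T \<times> {1..w})"
    unfolding Phi_def using S(1) assms(2) finite_subset[OF S(1)]
      member_le_sum[of "(i, j)" "insert i T \<times> {1..w}" "\<lambda>(i, j). \<bar>X i j\<bar> powr p"]
    by auto
  also have "\<dots> \<le> OPT p X h w s B"
    using S assms(5) by (intro Phi_le_OPT Times_in_M_kB)
  finally show ?thesis .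
qed

lemma finite_x_min_set:
  fixes X :: "nat \<Rightarrow> nat \<Rightarrow> real"
  shows "finite {\<bar>X i j\<bar> powr p | i j. i \<in> {1..h} \<and> j \<in> {1..w} \<and> \<bar>X i j\<bar> > 0}"
proof -
  have "{\<bar>X i j\<bar> powr p | i j. i \<in> {1..h} \<and> j \<in> {1..w} \<and> \<bar>X i j\<bar> > 0}
      \<subseteq> (\<lambda>(i, j). \<bar>X i j\<bar> powr p) ` ({1..h} \<times> {1..w})" by auto
  then show ?thesis by (rule finite_subset) simp
qed

lemma x_min_le_entry:
  assumes "i \<in> {1..h}" "j \<in> {1..w}" "X i j \<noteq> 0"
  shows "x_min p X h w \<le> \<bar>X i j\<bar> powr p"
  unfolding x_min_def by (rule Min_le[OF finite_x_min_set]) (use assms in auto)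

lemma x_min_nonneg:
  assumes "\<exists>i\<in>{1..h}. \<exists>j\<in>{1..w}. X i j \<noteq> 0"
  shows "0 \<le> x_min p X h w"
proof -
  obtain i j where "i \<in> {1..h}" "j \<in> {1..w}" "X i j \<noteq> 0" using assms by blast
  then have "{\<bar>X i j\<bar> powr p | i j. i \<in> {1..h} \<and> j \<in> {1..w} \<and> \<bar>X i j\<bar> > 0} \<noteq> {}"
    by auto
  then show ?thesis unfolding x_min_def by (subst Min_ge_iff[OF finite_x_min_set]) auto
qed

lemma x_min_le_OPT:
  assumes "\<exists>i\<in>{1..h}. \<exists>j\<in>{1..w}. X i j \<noteq> 0" "0 < s" "s \<le> h" "0 \<le> B"
  shows "x_min p X h w \<le> OPT p X h w s B"
  using assms x_min_le_entry entry_le_OPT by (meson order_trans)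

lemma lambda_optimal_Phi_ge:
  assumes "lambda_optimal p X h w s r \<Omega>r" "\<Omega> \<in> M_kB h w s B" "0 \<le> r"
  shows "Phi p X \<Omega> + r * (real (EMD w \<Omega>r) - B) \<le> Phi p X \<Omega>r"
proof -
  have "Phi p X \<Omega> - r * real (EMD w \<Omega>) \<le> Phi p X \<Omega>r - r * real (EMD w \<Omega>r)"
    using assms(1,2) by (auto simp: lambda_optimal_def M_kB_def)
  moreover have "r * real (EMD w \<Omega>) \<le> r * B"
    using assms(2,3) by (intro mult_left_mono) (auto simp: M_kB_def)
  ultimately show ?thesis by (simp add: algebra_simps)
qed

lemma lambda_optimal_pair_Phi_ge:
  assumes "lambda_optimal p X h w s l \<Omega>l" "lambda_optimal p X h w s r \<Omega>r"
    and "\<Omega> \<in> M_kB h w s B" "0 \<le> r" "r \<le> l"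
  shows "Phi p X \<Omega> - r * B - (l - r) * real (EMD w \<Omega>r) \<le> Phi p X \<Omega>l"
proof -
  have "Phi p X \<Omega>r - l * real (EMD w \<Omega>r) \<le> Phi p X \<Omega>l - l * real (EMD w \<Omega>l)"
    using assms(1,2) by (auto simp: lambda_optimal_def)
  moreover have "0 \<le> l * real (EMD w \<Omega>l)" using assms(4,5) by simp
  ultimately show ?thesis
    using lambda_optimal_Phi_ge[OF assms(2-4)] by (simp add: algebra_simps)
qed

lemma max_ge_quarter:
  fixes Opt x u \<delta> Pl Pr Pr' :: real
  assumes "0 \<le> Opt" "1 \<le> u" "0 \<le> \<delta>"
    and "(1 - \<delta>) * Opt - x \<le> Pl" "Opt + x * (u - 1) \<le> Pr" "Pr \<le> 2 * (u + 1) * Pr'"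
  shows "(1/4 - \<delta>) * Opt \<le> max Pr' Pl"
proof -
  let ?M = "max Pr' Pl"
  have "(u - 1) * ((1 - \<delta>) * Opt - x) \<le> (u - 1) * ?M"
    using assms(2,4) by (intro mult_left_mono) auto
  moreover have "2 * (u + 1) * Pr' \<le> 2 * (u + 1) * ?M"
    using assms(2) by (intro mult_left_mono) auto
  ultimately have "Opt + (u - 1) * (1 - \<delta>) * Opt \<le> (3 * u + 1) * ?M"
    using assms(5,6) by (simp add: algebra_simps)
  moreover have "0 \<le> Opt * (u - 1 + 8 * \<delta> * u + 8 * \<delta>)" using assms(1-3) by simp
  ultimately have "(3 * u + 1) * ((1/4 - \<delta>) * Opt) \<le> (3 * u + 1) * ?M"
    by (simp add: algebra_simps)
  then show ?thesis using assms(2) by simp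
qed

lemma le_mult_succ_if_div_floor_succ_le:
  fixes x y u :: real
  assumes "0 \<le> u" "0 \<le> y" "x / (2 * (real_of_int \<lfloor>u\<rfloor> + 1)) \<le> y"
  shows "x \<le> 2 * (u + 1) * y"
proof -
  have D: "0 < real_of_int \<lfloor>u\<rfloor> + 1" "real_of_int \<lfloor>u\<rfloor> + 1 \<le> u + 1"
    using assms(1) by linarith+
  then have "x \<le> 2 * (real_of_int \<lfloor>u\<rfloor> + 1) * y"
    using assms(3) by (simp add: divide_le_eq mult_ac)
  also have "\<dots> \<le> 2 * (u + 1) * y" using D(2) assms(2) by (intro mult_right_mono) auto
  finally show ?thesis .
qed

theorem lemma11:
  fixes p :: real and h w s :: nat and X :: "nat \<Rightarrow> nat \<Rightarrow> real"
    and B \<delta> l r :: real and \<Omega>l \<Omega>r \<Omega>r' :: "(nat \<times> nat) set"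
  assumes "p \<ge> 1" and "h > 0" and "w > 0" and "s > 0" and "s \<le> h"
    and "\<exists>i\<in>{1..h}. \<exists>j\<in>{1..w}. X i j \<noteq> 0"
    and "0 < B" and "B \<le> real w * real h ^ 2"
    and "0 < \<delta>" and "\<delta> < 1/4"
    and "0 \<le> r" and "r \<le> l"
    and "l - r \<le> \<delta> * x_min p X h w / (real w * real h ^ 2)"
    and "lambda_optimal p X h w s l \<Omega>l" and "real (EMD w \<Omega>l) \<le> B"
    and "lambda_optimal p X h w s r \<Omega>r" and "real (EMD w \<Omega>r) \<ge> B"
    and "is_support h w \<Omega>r'"
    and "Phi p X \<Omega>r' \<ge> Phi p X \<Omega>r / (2 * (real_of_int \<lfloor>real (EMD w \<Omega>r) / B\<rfloor> + 1))"
  shows "max (Phi p X \<Omega>r') (Phi p X \<Omega>l) \<ge> (1/4 - \<delta>) * OPT p X h w s B"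
proof -
  define Er where "Er = real (EMD w \<Omega>r)"
  define u where "u = Er / B"
  have "\<Omega>l \<in> M_kB h w s B" using assms(14,15) by (simp add: lambda_optimal_def M_kB_def)
  then obtain \<Omega> where \<Omega>: "\<Omega> \<in> M_kB h w s B" "Phi p X \<Omega> = OPT p X h w s B"
    using OPT_attained by blast
  have u: "1 \<le> u" "Er = u * B" using assms(7,17) by (simp_all add: u_def Er_def)
  have "(l - r) * Er \<le> \<delta> * x_min p X h w / (real w * real h ^ 2) * (real w * real h ^ 2)"
    using assms(12,13,16) EMD_le_S_s x_min_nonneg[OF assms(6)] assms(9)
    by (intro mult_mono) (auto simp: Er_def lambda_optimal_def)
  also have "\<dots> \<le> \<delta> * OPT p X h w s B"
    using assms(2-5,7,9) x_min_le_OPT[OF assms(6)] by simp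
  finally have "(1 - \<delta>) * OPT p X h w s B - r * B \<le> Phi p X \<Omega>l"
    using lambda_optimal_pair_Phi_ge[OF assms(14,16) \<Omega>(1) assms(11,12)] \<Omega>(2)
    by (simp add: Er_def algebra_simps)
  moreover have "OPT p X h w s B + r * B * (u - 1) \<le> Phi p X \<Omega>r"
    using lambda_optimal_Phi_ge[OF assms(16) \<Omega>(1) assms(11)] \<Omega>(2) u
    by (simp add: Er_def algebra_simps)
  moreover have "Phi p X \<Omega>r \<le> 2 * (u + 1) * Phi p X \<Omega>r'"
    using assms(19) u(1) Phi_nonneg
    by (intro le_mult_succ_if_div_floor_succ_le) (auto simp: u_def Er_def)
  ultimately show ?thesis
    using max_ge_quarter[OF _ u(1)] \<Omega>(2) Phi_nonneg[of p X \<Omega>] assms(9) by simp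
qed

end
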